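(* Consider FedProx, as described in the context, and a round $t$ whose step size satisfies $\gamma_t\le1/\alpha$. Assume that the bounded variance, bounded stochastic gradient norm and $L$-smoothness assumptions hold. Then for every client $i$ and every $k\in\{0,\dots,E\}$, $$\mathbb{E}\|\overline{\mathbf{w}}_{t,k}-\mathbf{w}^i_{t,k}\|^2\le4\gamma_t^2E^2G^2.$$
   Context: Setting: there are $C$ clients with weights $p_i\ge0$ satisfying $\sum_ip_i=1$, local objectives $F_i:\mathbb{R}^D\to\mathbb{R}$, and global objective $F=\sum_ip_iF_i$. FedProx with $\alpha>0$, $E\ge1$ local steps and step sizes $\gamma_t$, with all clients participating: in round $t$, $\mathbf{w}^i_{t,0}=\overline{\mathbf{w}}_{t,0}$ and, for $k=0,\dots,E-1$, $$\mathbf{w}^i_{t,k+1}=(1-\alpha\gamma_t)\mathbf{w}^i_{t,k}+\alpha\gamma_t\overline{\mathbf{w}}_{t,0}-\gamma_tg_i(\mathbf{w}^i_{t,k}),$$ with stochastic gradients $g_i$ of $F_i$ sampled independently given the past. Also $\overline{\mathbf{w}}_{t,k}=\sum_ip_i\mathbf{w}^i_{t,k}$ and $\overline{\mathbf{w}}_{t+1,0}=\overline{\mathbf{w}}_{t,E}$. Assumptions: - Unbiasedness: $\mathbb{E}\,g_i(\mathbf{w}^i_{t,k})=\nabla F_i(\mathbf{w}^i_{t,k})$. - Variance: $\mathbb{E}\|g_i(\mathbf{w}^i_{t,k})-\nabla F_i(\mathbf{w}^i_{t,k})\|^2\le\sigma^2$. - Bounded second moment: $\mathbb{E}\|g_i(\mathbf{w}^i_{t,k})\|^2\le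 G^2$ for all $i,t,k$. - Smoothness: each $\nabla F_i$ is $L$-Lipschitz. $\mathbb{E}$ is total expectation. *)

theory Defs
  imports "HOL-Probability.Probability"
begin

definition wavg :: "nat \<Rightarrow> (nat \<Rightarrow> real) \<Rightarrow> (nat \<Rightarrow> 'a \<Rightarrow> 'v::real_vector) \<Rightarrow> 'a \<Rightarrow> 'v" where
  "wavg C p x \<omega> = (\<Sum>j<C. p j *\<^sub>R x j \<omega>)"

end

(* Within a round every client drifts from the round's starting average w0 = wbar_{t,0}:
   d_l(k) = w^l_{t,k} - w0 satisfies d_l(0) = 0 and d_l(k+1) = (1 - alpha gamma) d_l(k) - gamma g_l(k).
   As 0 <= alpha gamma <= 1 the damping never amplifies, so |d_l(k)| <= gamma sum_{j<k} |g_l(j)|, and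
   Cauchy-Schwarz with the second-moment bound gives E |d_l(k)|^2 <= gamma^2 k^2 G^2.  Finally
   wbar_{t,k} - w^i_{t,k} = sum_l p_l d_l(k) - d_i(k), and |u - v|^2 <= 2|u|^2 + 2|v|^2 together with
   Jensen's inequality for the average yields the factor 4. *)

theory Submission
  imports Defs
begin

lemma power2_norm_convex_combination_le:
  fixes x :: "'b \<Rightarrow> 'v::real_normed_vector"
  assumes p_nonneg: "\<And>l. l \<in> A \<Longrightarrow> 0 \<le> p l" and p_sum: "sum p A = 1"
  shows "(norm (\<Sum>l\<in>A. p l *\<^sub>R x l))\<^sup>2 \<le> (\<Sum>l\<in>A. p l * (norm (x l))\<^sup>2)"
proof -
  have "finite A" "A \<noteq> {}"
    using p_sum by (auto simp: sum.infinite intro: ccontr)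
  have "norm (\<Sum>l\<in>A. p l *\<^sub>R x l) \<le> (\<Sum>l\<in>A. p l * norm (x l))"
    using norm_sum[of "\<lambda>l. p l *\<^sub>R x l" A] p_nonneg by simp
  then have "(norm (\<Sum>l\<in>A. p l *\<^sub>R x l))\<^sup>2 \<le> (\<Sum>l\<in>A. p l * norm (x l))\<^sup>2"
    by (simp add: power_mono)
  also have "\<dots> \<le> (\<Sum>l\<in>A. p l * (norm (x l))\<^sup>2)"
    using convex_on_sum[OF \<open>finite A\<close> \<open>A \<noteq> {}\<close> convex_power2 p_sum p_nonneg,
        of "\<lambda>l. norm (x l)"]
    by simp
  finally show ?thesis .
qed

lemma power2_norm_convex_combination_diff_le:
  fixes x :: "'b \<Rightarrow> 'v::real_normed_vector"
  assumes p_nonneg: "\<And>l. l \<in> A \<Longrightarrow> 0 \<le> p l" and p_sum: "sum p A = 1"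
  shows "(norm ((\<Sum>l\<in>A. p l *\<^sub>R x l) - x i))\<^sup>2
           \<le> 2 * (\<Sum>l\<in>A. p l * (norm (x l - y))\<^sup>2) + 2 * (norm (x i - y))\<^sup>2"
proof -
  define u where "u = (\<Sum>l\<in>A. p l *\<^sub>R (x l - y))"
  have "(\<Sum>l\<in>A. p l *\<^sub>R x l) - x i = u - (x i - y)"
    using p_sum by (simp add: u_def scaleR_diff_right sum_subtractf flip: scaleR_sum_left)
  then have "norm ((\<Sum>l\<in>A. p l *\<^sub>R x l) - x i) \<le> norm u + norm (x i - y)"
    by (simp only: norm_triangle_ineq4)
  then have "(norm ((\<Sum>l\<in>A. p l *\<^sub>R x l) - x i))\<^sup>2 \<le> (norm u + norm (x i - y))\<^sup>2"
    by (simp add: power_mono)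
  also have "\<dots> \<le> 2 * (norm u)\<^sup>2 + 2 * (norm (x i - y))\<^sup>2"
    using zero_le_power2[of "norm u - norm (x i - y)"] by (simp add: power2_eq_square algebra_simps)
  also have "\<dots> \<le> 2 * (\<Sum>l\<in>A. p l * (norm (x l - y))\<^sup>2) + 2 * (norm (x i - y))\<^sup>2"
    using power2_norm_convex_combination_le[OF p_nonneg p_sum] by (simp add: u_def)
  finally show ?thesis .
qed

lemma norm_damped_recursion_le:
  fixes d u :: "nat \<Rightarrow> 'v::real_normed_vector"
  assumes "d 0 = 0"
    and recursion: "\<And>j. j < n \<Longrightarrow> d (Suc j) = (1 - a) *\<^sub>R d j - c *\<^sub>R u j"
    and "0 \<le> a" "a \<le> 1" "0 \<le> c" "k \<le> n"
  shows "norm (d k) \<le> c * (\<Sum>j<k. norm (u j))"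
  using \<open>k \<le> n\<close>
proof (induction k)
  case 0
  then show ?case using \<open>d 0 = 0\<close> by simp
next
  case (Suc k)
  have "norm (d (Suc k)) \<le> norm ((1 - a) *\<^sub>R d k) + norm (c *\<^sub>R u k)"
  proof -
    have "d (Suc k) = (1 - a) *\<^sub>R d k - c *\<^sub>R u k"
      using recursion Suc.prems by simp
    then show ?thesis by (simp only: norm_triangle_ineq4)
  qed
  also have "\<dots> \<le> norm (d k) + c * norm (u k)"
    using assms(3-5) by (simp add: mult_left_le_one_le)
  also have "\<dots> \<le> c * (\<Sum>j<Suc k. norm (u j))"
    using Suc by (simp add: distrib_left)
  finally show ?case .
qed

lemma power2_norm_damped_recursion_le:
  fixes d u :: "nat \<Rightarrow> 'v::real_normed_vector"
  assumes "d 0 = 0"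
    and "\<And>j. j < n \<Longrightarrow> d (Suc j) = (1 - a) *\<^sub>R d j - c *\<^sub>R u j"
    and "0 \<le> a" "a \<le> 1" "0 \<le> c" "k \<le> n"
  shows "(norm (d k))\<^sup>2 \<le> c\<^sup>2 * k * (\<Sum>j<k. (norm (u j))\<^sup>2)"
proof -
  have "(norm (d k))\<^sup>2 \<le> (c * (\<Sum>j<k. norm (u j)))\<^sup>2"
    using norm_damped_recursion_le[OF assms] by (simp add: power_mono)
  also have "\<dots> \<le> c\<^sup>2 * (k * (\<Sum>j<k. (norm (u j))\<^sup>2))"
    using sum_squared_le_sum_of_squares[of "\<lambda>j. norm (u j)" "{..<k}"]
    by (simp add: power_mult_distrib mult.commute mult_left_mono)
  finally show ?thesis by (simp add: mult.assoc)
qed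

lemma second_moment_dominated:
  fixes f :: "'a \<Rightarrow> 'v::{banach, second_countable_topology}"
    and u :: "nat \<Rightarrow> 'a \<Rightarrow> 'w::real_normed_vector"
  assumes f_meas: "f \<in> borel_measurable M"
    and dominated: "\<And>\<omega>. \<omega> \<in> space M \<Longrightarrow> (norm (f \<omega>))\<^sup>2 \<le> b * (\<Sum>j<k. (norm (u j \<omega>))\<^sup>2)"
    and u_int: "\<And>j. j < k \<Longrightarrow> integrable M (\<lambda>\<omega>. (norm (u j \<omega>))\<^sup>2)"
    and u_moment: "\<And>j. j < k \<Longrightarrow> (\<integral>\<omega>. (norm (u j \<omega>))\<^sup>2 \<partial>M) \<le> G\<^sup>2"
    and "0 \<le> b"
  shows "integrable M (\<lambda>\<omega>. (norm (f \<omega>))\<^sup>2)"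
    and "(\<integral>\<omega>. (norm (f \<omega>))\<^sup>2 \<partial>M) \<le> b * k * G\<^sup>2"
proof -
  define S where "S \<omega> = (\<Sum>j<k. (norm (u j \<omega>))\<^sup>2)" for \<omega>
  have S_int: "integrable M (\<lambda>\<omega>. b * S \<omega>)"
    using u_int by (auto simp: S_def intro!: Bochner_Integration.integrable_sum)
  show f_int: "integrable M (\<lambda>\<omega>. (norm (f \<omega>))\<^sup>2)"
  proof (rule Bochner_Integration.integrable_bound[OF S_int])
    show "(\<lambda>\<omega>. (norm (f \<omega>))\<^sup>2) \<in> borel_measurable M"
      using f_meas by measurable
    show "AE \<omega> in M. norm ((norm (f \<omega>))\<^sup>2) \<le> norm (b * S \<omega>)"
      using dominated by (auto simp: S_def intro!: AE_I2 order_trans[OF _ abs_ge_self])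
  qed
  have "(\<integral>\<omega>. (norm (f \<omega>))\<^sup>2 \<partial>M) \<le> (\<integral>\<omega>. b * S \<omega> \<partial>M)"
    using S_int f_int dominated by (intro integral_mono) (auto simp: S_def)
  also have "\<dots> = b * (\<Sum>j<k. \<integral>\<omega>. (norm (u j \<omega>))\<^sup>2 \<partial>M)"
    using u_int by (simp add: S_def)
  also have "\<dots> \<le> b * (\<Sum>j<k. G\<^sup>2)"
    using u_moment \<open>0 \<le> b\<close> by (intro mult_left_mono sum_mono) auto
  finally show "(\<integral>\<omega>. (norm (f \<omega>))\<^sup>2 \<partial>M) \<le> b * k * G\<^sup>2"
    by simp
qed

lemma integral_power2_norm_convex_combination_diff_le:
  fixes x :: "'b \<Rightarrow> 'a \<Rightarrow> 'v::real_normed_vector"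
  assumes p_nonneg: "\<And>l. l \<in> A \<Longrightarrow> 0 \<le> p l" and p_sum: "sum p A = 1" and "i \<in> A"
    and drift_int: "\<And>l. l \<in> A \<Longrightarrow> integrable M (\<lambda>\<omega>. (norm (x l \<omega> - y \<omega>))\<^sup>2)"
    and drift_le: "\<And>l. l \<in> A \<Longrightarrow> (\<integral>\<omega>. (norm (x l \<omega> - y \<omega>))\<^sup>2 \<partial>M) \<le> D"
  shows "(\<integral>\<omega>. (norm ((\<Sum>l\<in>A. p l *\<^sub>R x l \<omega>) - x i \<omega>))\<^sup>2 \<partial>M) \<le> 4 * D"
proof -
  let ?drift = "\<lambda>l \<omega>. (norm (x l \<omega> - y \<omega>))\<^sup>2"
  have "(\<integral>\<omega>. (norm ((\<Sum>l\<in>A. p l *\<^sub>R x l \<omega>) - x i \<omega>))\<^sup>2 \<partial>M)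
        \<le> (\<integral>\<omega>. 2 * (\<Sum>l\<in>A. p l * ?drift l \<omega>) + 2 * ?drift i \<omega> \<partial>M)"
    using power2_norm_convex_combination_diff_le[OF p_nonneg p_sum] drift_int \<open>i \<in> A\<close> p_nonneg
    by (intro integral_mono') (auto intro!: add_nonneg_nonneg mult_nonneg_nonneg sum_nonneg)
  also have "\<dots> = 2 * (\<Sum>l\<in>A. p l * (\<integral>\<omega>. ?drift l \<omega> \<partial>M)) + 2 * (\<integral>\<omega>. ?drift i \<omega> \<partial>M)"
    using drift_int \<open>i \<in> A\<close> by simp
  also have "\<dots> \<le> 2 * (\<Sum>l\<in>A. p l * D) + 2 * D"
    using drift_le p_nonneg \<open>i \<in> A\<close> by (intro add_mono mult_left_mono sum_mono) auto
  also have "\<dots> = 4 * D"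
    using p_sum by (simp flip: sum_distrib_right)
  finally show ?thesis .
qed

theorem lemma3:
  fixes M :: "'a measure"
    and C E :: nat
    and p :: "nat \<Rightarrow> real"
    and \<alpha> G \<sigma> L :: real
    and \<gamma> :: "nat \<Rightarrow> real"
    and F :: "nat \<Rightarrow> real ^ 'd \<Rightarrow> real"
    and gradF :: "nat \<Rightarrow> real ^ 'd \<Rightarrow> real ^ 'd"
    and w g :: "nat \<Rightarrow> nat \<Rightarrow> nat \<Rightarrow> 'a \<Rightarrow> real ^ 'd"
    and t :: nat
  assumes prob: "prob_space M"
    and p_nonneg: "\<forall>i<C. p i \<ge> 0"
    and p_sum: "(\<Sum>i<C. p i) = 1"
    and alpha_pos: "\<alpha> > 0"
    and E_ge: "E \<ge> 1"
    and gamma_pos: "\<forall>s. \<gamma> s > 0"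
    and w_meas: "\<forall>i<C. \<forall>s k. w i s k \<in> borel_measurable M"
    and g_meas: "\<forall>i<C. \<forall>s k. g i s k \<in> borel_measurable M"
    and init: "\<forall>i<C. \<forall>s. \<forall>\<omega>\<in>space M.
                 w i s 0 \<omega> = wavg C p (\<lambda>j. w j s 0) \<omega>"
    and step: "\<forall>i<C. \<forall>s. \<forall>k<E. \<forall>\<omega>\<in>space M.
                 w i s (Suc k) \<omega> = (1 - \<alpha> * \<gamma> s) *\<^sub>R w i s k \<omega>
                   + (\<alpha> * \<gamma> s) *\<^sub>R wavg C p (\<lambda>j. w j s 0) \<omega>
                   - \<gamma> s *\<^sub>R g i s k \<omega>"
    and round: "\<forall>s. \<forall>\<omega>\<in>space M.
                 wavg C p (\<lambda>j. w j (Suc s) 0) \<omega> = wavg C p (\<lambda>j. w j s E) \<omega>"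
    and variance: "\<forall>i<C. \<forall>s k.
                 integrable M (\<lambda>\<omega>. (norm (g i s k \<omega> - gradF i (w i s k \<omega>)))\<^sup>2) \<and>
                 (\<integral>\<omega>. (norm (g i s k \<omega> - gradF i (w i s k \<omega>)))\<^sup>2 \<partial>M) \<le> \<sigma>\<^sup>2"
    and second_moment: "\<forall>i<C. \<forall>s k.
                 integrable M (\<lambda>\<omega>. (norm (g i s k \<omega>))\<^sup>2) \<and>
                 (\<integral>\<omega>. (norm (g i s k \<omega>))\<^sup>2 \<partial>M) \<le> G\<^sup>2"
    and grad: "\<forall>i<C. \<forall>x. (F i has_derivative (\<lambda>h. gradF i x \<bullet> h)) (at x)"
    and smooth: "\<forall>i<C. \<forall>x y. norm (gradF i x - gradF i y) \<le> L * norm (x - y)"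
    and step_small: "\<gamma> t \<le> 1 / \<alpha>"
  shows "\<forall>i<C. \<forall>k\<le>E.
           (\<integral>\<omega>. (norm (wavg C p (\<lambda>j. w j t k) \<omega> - w i t k \<omega>))\<^sup>2 \<partial>M)
             \<le> 4 * (\<gamma> t)\<^sup>2 * (real E)\<^sup>2 * G\<^sup>2"
proof (intro allI impI)
  fix i k
  assume "i < C" and "k \<le> E"
  define w0 where "w0 = wavg C p (\<lambda>j. w j t 0)"
  have damping: "0 \<le> \<alpha> * \<gamma> t" "\<alpha> * \<gamma> t \<le> 1"
    using alpha_pos gamma_pos step_small by (auto simp: field_simps less_imp_le)
  have drift_bound: "(norm (w l t k \<omega> - w0 \<omega>))\<^sup>2
      \<le> (\<gamma> t)\<^sup>2 * k * (\<Sum>j<k. (norm (g l t j \<omega>))\<^sup>2)"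
    if "l < C" "\<omega> \<in> space M" for l \<omega>
  proof (rule power2_norm_damped_recursion_le[where n = E and a = "\<alpha> * \<gamma> t"])
    show "w l t 0 \<omega> - w0 \<omega> = 0"
      using init that by (simp add: w0_def)
    show "w l t (Suc j) \<omega> - w0 \<omega>
        = (1 - \<alpha> * \<gamma> t) *\<^sub>R (w l t j \<omega> - w0 \<omega>) - \<gamma> t *\<^sub>R g l t j \<omega>" if "j < E" for j
      using step \<open>l < C\<close> \<open>\<omega> \<in> space M\<close> \<open>j < E\<close> by (simp add: w0_def algebra_simps)
  qed (use damping gamma_pos \<open>k \<le> E\<close> in \<open>auto intro: less_imp_le\<close>)
  have drift_meas: "(\<lambda>\<omega>. w l t k \<omega> - w0 \<omega>) \<in> borel_measurable M" if "l < C" for l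
    using w_meas that
    by (auto simp: w0_def wavg_def
        intro!: borel_measurable_diff borel_measurable_sum borel_measurable_scaleR)
  note drift_second_moment = second_moment_dominated[OF drift_meas drift_bound]
  have "(\<integral>\<omega>. (norm (wavg C p (\<lambda>j. w j t k) \<omega> - w i t k \<omega>))\<^sup>2 \<partial>M)
      \<le> 4 * ((\<gamma> t)\<^sup>2 * k * k * G\<^sup>2)"
    unfolding wavg_def
    using p_nonneg p_sum \<open>i < C\<close> second_moment
    by (intro integral_power2_norm_convex_combination_diff_le[where y = w0]
        drift_second_moment) auto
  also have "\<dots> \<le> 4 * (\<gamma> t)\<^sup>2 * (real E)\<^sup>2 * G\<^sup>2"
  proof -
    have "real k * real k \<le> (real E)\<^sup>2"
      using \<open>k \<le> E\<close> by (simp add: power2_eq_square mult_mono)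
    from mult_right_mono[OF mult_left_mono[OF this, of "(\<gamma> t)\<^sup>2"], of "G\<^sup>2"]
    show ?thesis by (simp add: mult.assoc)
  qed
  finally show "(\<integral>\<omega>. (norm (wavg C p (\<lambda>j. w j t k) \<omega> - w i t k \<omega>))\<^sup>2 \<partial>M)
      \<le> 4 * (\<gamma> t)\<^sup>2 * (real E)\<^sup>2 * G\<^sup>2" .
qed

end
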